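(* We have \begin{align*} \sum_{k=1}^\infty\frac{5k-2}{k(2k-1)2^k\binom{3k}k}&=\frac{\pi}6,\\ \sum_{k=1}^\infty\frac{(7k-3)8^k}{k(2k-1)3^k\binom{3k}k}&=\frac{8\sqrt3}9\pi,\\ \sum_{k=1}^\infty\frac{28k-11}{k(2k-1)(-4)^k\binom{3k}k}&=-2\log2,\\ \sum_{k=1}^\infty\frac{7k-2}{k(2k-1)(-3)^k\binom{4k}{2k}}&=-\frac{\log3}4,\\ \sum_{k=1}^\infty\frac{10k-3}{k(2k-1)\binom{4k}{2k}}&=\frac{2\sqrt3}9\pi,\\ \sum_{k=1}^\infty\frac{(3k-1)4^k}{k(2k-1)\binom{4k}{2k}}&=\frac{\pi}2,\\ \sum_{k=1}^\infty\frac{(6k-1)(-2)^{k-1}}{k(2k-1)\binom{4k}{2k}}&=\frac{\pi}4,\\ \sum_{k=1}^\infty\frac{14k-3}{k(2k-1)4^k\binom{4k}{2k}}&=\frac23\log2,\\ \sum_{k=1}^\infty\frac{(12k^2+1)4^k}{\binom{4k}{2k}}&=\frac{11}2\pi+\frac{50}3,\\ \sum_{k=1}^\infty\frac{k(126k+29)(-2)^k}{\binom{4k}{2k}}&=-2\pi-\frac{65}3,\\ \sum_{k=1}^\infty\frac{k(70k-37)}{4^k\binom{4k}{2k}}&=\frac8{729}(46\log2+111). \end{align*}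
   Context: $\log$ is the natural logarithm. *)

theory Defs
  imports "HOL-Analysis.Analysis"
begin

end

theory Submission
  imports Defs "HOL-Real_Asymp.Real_Asymp"
begin

(* The first eight series are instances of
     sum (a k + b) z^k / (k (2k - 1) C(3k, k))   and   sum (a k + b) z^k / (k (2k - 1) C(4k, 2k)).
   By the Beta integral, (a k + b) / (k (2k - 1) C(3k, k)) is the integral over [0, 1] of
   (x (1 - x)^2)^(k-1) against a weight linear in x, and (a k + b) / (k (2k - 1) C(4k, 2k)) that of
   (x (1 - x))^(2k-2) against a weight linear in x (1 - x). Summing the geometric series under the
   integral sign turns each series into the integral of a rational function w(x) / (1 - z x (1 - x)^2),
   resp. w(x) / (1 - z (x (1 - x))^2). For each of the eight values of z the denominator factors into
   linear and quadratic factors, one of which often cancels against w, and the integral is evaluated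
   with arctan and ln.
   The last three series telescope against the C(4k, 2k)-series for z = 4, -2, 1/4: their terms differ
   from a multiple of those terms by G(k+1) - G(k), with G(k) = r(k) z^k / (k (2k - 1) C(4k, 2k)) for a
   polynomial r found by Gosper's algorithm, and G(k) tends to 0 because C(4k, 2k) grows like 16^k. *)

lemma has_integral_power_mult_power_one_minus:
  "((\<lambda>t::real. t ^ m * (1 - t) ^ n) has_integral (fact m * fact n / fact (m + n + 1))) {0..1}"
proof -
  have "((\<lambda>t. t powr (real m + 1 - 1) * (1 - t) powr (real n + 1 - 1)) has_integral
          Beta (real m + 1) (real n + 1)) {0..1}"
    by (rule has_integral_Beta_real) auto
  moreover have "Beta (real m + 1) (real n + 1) = fact m * fact n / fact (m + n + 1)"
  proof -
    have "Gamma (real k + 1) = fact k" for k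
      using Gamma_fact[of k] by (simp add: add.commute)
    from this[of m] this[of n] this[of "m + n + 1"] show ?thesis
      by (simp add: Beta_def add_ac)
  qed
  ultimately show ?thesis
    by (subst has_integral_spike_finite_eq[of "{0, 1}"]) (auto simp: powr_realpow)
qed

lemma has_integral_antiderivative:
  fixes F f :: "real \<Rightarrow> real"
  assumes "a \<le> b"
    and "\<And>x. x \<in> {a..b} \<Longrightarrow> (F has_real_derivative f x) (at x)"
    and "F b - F a = I"
  shows "(f has_integral I) {a..b}"
  using assms
  by (metis fundamental_theorem_of_calculus has_field_derivative_at_within
      has_real_derivative_iff_has_vector_derivative)

lemma integral_geometric_tail_tendsto_0:
  fixes w u :: "real \<Rightarrow> real"
  assumes "a \<le> b"
    and cont: "continuous_on {a..b} w" "continuous_on {a..b} u"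
    and bound: "\<And>x. x \<in> {a..b} \<Longrightarrow> \<bar>u x\<bar> \<le> c" and "0 \<le> c" "c < 1"
  shows "(\<lambda>N. integral {a..b} (\<lambda>x. w x * u x ^ N / (1 - u x))) \<longlonglongrightarrow> 0"
proof -
  obtain M where M: "\<And>x. x \<in> {a..b} \<Longrightarrow> \<bar>w x\<bar> \<le> M"
    using compact_imp_bounded[OF compact_continuous_image[OF cont(1) compact_Icc]]
    unfolding bounded_iff by fastforce
  have pos: "1 - u x \<ge> 1 - c" "1 - c > 0" if "x \<in> {a..b}" for x
    using bound[OF that] \<open>c < 1\<close> by linarith+
  have tail_bound: "norm (integral {a..b} (\<lambda>x. w x * u x ^ N / (1 - u x))) \<le> M / (1 - c) * c ^ N * (b - a)"
    for N
  proof (rule integral_bound[OF \<open>a \<le> b\<close>])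
    show "continuous_on {a..b} (\<lambda>x. w x * u x ^ N / (1 - u x))"
      using pos by (intro continuous_intros cont) fastforce
    fix x
    assume x: "x \<in> {a..b}"
    have "\<bar>w x\<bar> * \<bar>u x\<bar> ^ N / (1 - u x) \<le> M * c ^ N / (1 - c)"
      using M[OF x] bound[OF x] pos[OF x] by (intro frac_le mult_mono power_mono) auto
    then show "norm (w x * u x ^ N / (1 - u x)) \<le> M / (1 - c) * c ^ N"
      using pos[OF x] by (simp add: abs_mult abs_divide power_abs)
  qed
  have "(\<lambda>N. M / (1 - c) * c ^ N * (b - a)) \<longlonglongrightarrow> 0"
    using \<open>0 \<le> c\<close> \<open>c < 1\<close>
    by (intro tendsto_mult_left_zero tendsto_mult_right_zero LIMSEQ_power_zero) auto
  then show ?thesis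
    by (rule Lim_null_comparison[rotated]) (use tail_bound in \<open>auto intro: always_eventually\<close>)
qed

lemma sums_integral_geometric:
  fixes w u :: "real \<Rightarrow> real" and f :: "nat \<Rightarrow> real"
  assumes "a \<le> b"
    and cont: "continuous_on {a..b} w" "continuous_on {a..b} u"
    and bound: "\<And>x. x \<in> {a..b} \<Longrightarrow> \<bar>u x\<bar> \<le> c" and "0 \<le> c" "c < 1"
    and terms: "\<And>n. ((\<lambda>x. w x * u x ^ n) has_integral f n) {a..b}"
    and total: "((\<lambda>x. w x / (1 - u x)) has_integral I) {a..b}"
  shows "f sums I"
proof -
  define r where "r N x = w x * u x ^ N / (1 - u x)" for N x
  have pos: "1 - u x > 0" if "x \<in> {a..b}" for x
    using bound[OF that] \<open>c < 1\<close> by linarith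
  have r_integrable: "r N integrable_on {a..b}" for N
    unfolding r_def using pos by (intro integrable_continuous_interval continuous_intros cont) fastforce
  have partial_sums: "(\<Sum>n<N. f n) = I - integral {a..b} (r N)" for N
  proof -
    have "(\<Sum>n<N. w x * u x ^ n) = w x / (1 - u x) - r N x" if "x \<in> {a..b}" for x
      using pos[OF that]
      by (simp add: r_def sum_distrib_left[symmetric] sum_gp_strict diff_divide_distrib right_diff_distrib)
    then have "((\<lambda>x. \<Sum>n<N. w x * u x ^ n) has_integral (I - integral {a..b} (r N))) {a..b}"
      by (subst has_integral_cong) (auto intro!: has_integral_diff total r_integrable)
    moreover have "((\<lambda>x. \<Sum>n<N. w x * u x ^ n) has_integral (\<Sum>n<N. f n)) {a..b}"
      by (intro has_integral_sum terms) auto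
    ultimately show ?thesis
      using has_integral_unique by blast
  qed
  have "(\<lambda>N. integral {a..b} (r N)) \<longlonglongrightarrow> 0"
    unfolding r_def using assms(1-6) by (rule integral_geometric_tail_tendsto_0)
  then show ?thesis
    unfolding sums_def partial_sums by (auto intro: tendsto_eq_intros)
qed

lemma choose_3k_k_factorial:
  "real (Suc n) * (2 * real (Suc n) - 1) * real (3 * Suc n choose Suc n)
     = 3 * fact (3 * n + 2) / (2 * fact n * fact (2 * n))"
proof -
  have binomial: "real (3 * Suc n choose Suc n) = fact (3 * Suc n) / (fact (Suc n) * fact (2 * Suc n))"
    by (subst binomial_fact) auto
  have index: "3 * Suc n = Suc (Suc (Suc (3 * n)))" "2 * Suc n = Suc (Suc (2 * n))"
    by simp_all
  show ?thesis
    unfolding binomial unfolding index by (simp add: divide_simps)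
qed

lemma choose_4k_2k_factorial:
  "real (Suc n) * (2 * real (Suc n) - 1) * real (4 * Suc n choose (2 * Suc n))
     = fact (4 * n + 3) / (fact (2 * n) * fact (2 * n + 1))"
proof -
  have binomial: "real (4 * Suc n choose (2 * Suc n)) = fact (4 * Suc n) / (fact (2 * Suc n) * fact (2 * Suc n))"
    by (subst binomial_fact) auto
  have index: "4 * Suc n = Suc (Suc (Suc (Suc (4 * n))))" "4 * n + 3 = Suc (Suc (Suc (4 * n)))"
      "2 * Suc n = Suc (Suc (2 * n))"
    by simp_all
  show ?thesis
    unfolding binomial unfolding index by (simp add: divide_simps) (simp add: algebra_simps)
qed

(* The Beta integrals of x^(n+1) (1 - x)^(2n) and x^n (1 - x)^(2n+1) are in the ratio (n+1) : (2n+1),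
   which is why the weight (a + 2b) x - b (1 - x) produces the factor a (n+1) + b. *)
lemma has_integral_choose_3k_term:
  fixes a b z :: real
  shows "((\<lambda>x. 2/3 * z * ((a + 2 * b) * x - b * (1 - x)) * (z * x * (1 - x)^2) ^ n) has_integral
     (a * real (Suc n) + b) * z ^ Suc n /
       (real (Suc n) * (2 * real (Suc n) - 1) * real (3 * Suc n choose Suc n))) {0..1}"
proof -
  define \<beta> where "\<beta> = fact n * fact (2 * n) / (fact (3 * n + 2) :: real)"
  have beta1: "((\<lambda>x. x ^ Suc n * (1 - x) ^ (2 * n)) has_integral (real n + 1) * \<beta>) {0..1}"
    by (rule has_integral_eq_rhs[OF has_integral_power_mult_power_one_minus])
       (simp add: \<beta>_def divide_simps)
  have beta2: "((\<lambda>x. x ^ n * (1 - x) ^ (2 * n + 1)) has_integral (2 * real n + 1) * \<beta>) {0..1}"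
    by (rule has_integral_eq_rhs[OF has_integral_power_mult_power_one_minus])
       (simp add: \<beta>_def divide_simps)
  have integrand: "2/3 * z * ((a + 2 * b) * x - b * (1 - x)) * (z * x * (1 - x)^2) ^ n
      = 2/3 * z ^ Suc n * ((a + 2 * b) * (x ^ Suc n * (1 - x) ^ (2 * n))
          - b * (x ^ n * (1 - x) ^ (2 * n + 1)))" for x :: real
  proof -
    have powers: "(z * x * (1 - x)^2) ^ n = z ^ n * x ^ n * (1 - x) ^ (2 * n)"
      by (simp only: power_mult_distrib power_mult)
    show ?thesis
      unfolding powers by (simp add: algebra_simps)
  qed
  have total: "2/3 * z ^ Suc n * ((a + 2 * b) * ((real n + 1) * \<beta>) - b * ((2 * real n + 1) * \<beta>))
      = (a * real (Suc n) + b) * z ^ Suc n /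
          (real (Suc n) * (2 * real (Suc n) - 1) * real (3 * Suc n choose Suc n))"
  proof -
    have "3 * fact (3 * n + 2) / (2 * fact n * fact (2 * n)) = 3 / (2 * \<beta>)"
      by (simp add: \<beta>_def)
    then show ?thesis
      unfolding choose_3k_k_factorial by (simp add: field_simps)
  qed
  show ?thesis
    unfolding integrand total[symmetric] by (intro has_integral_mult_right has_integral_diff beta1 beta2)
qed

(* Here the Beta integrals of (x (1 - x))^(2n) and (x (1 - x))^(2n+1) are in the ratio 2 (4n+3) : (2n+1). *)
lemma has_integral_choose_4k_term:
  fixes a b z :: real
  shows "((\<lambda>x. z * ((a + 2 * b) / 4 - (b + (a + 2 * b) / 2) * (x * (1 - x))) * (z * (x * (1 - x))^2) ^ n)
     has_integral (a * real (Suc n) + b) * z ^ Suc n /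
       (real (Suc n) * (2 * real (Suc n) - 1) * real (4 * Suc n choose (2 * Suc n)))) {0..1}"
proof -
  define \<gamma> where "\<gamma> = fact (2 * n) * fact (2 * n + 1) / (fact (4 * n + 3) :: real)"
  have index: "4 * n + 3 = Suc (Suc (4 * n + 1))"
    by simp
  have beta1: "((\<lambda>x. x ^ (2 * n) * (1 - x) ^ (2 * n)) has_integral 2 * (4 * real n + 3) * \<gamma>) {0..1}"
    by (rule has_integral_eq_rhs[OF has_integral_power_mult_power_one_minus])
       (unfold \<gamma>_def index, simp add: divide_simps, simp add: algebra_simps)
  have beta2: "((\<lambda>x. x ^ (2 * n + 1) * (1 - x) ^ (2 * n + 1)) has_integral (2 * real n + 1) * \<gamma>) {0..1}"
    by (rule has_integral_eq_rhs[OF has_integral_power_mult_power_one_minus])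
       (unfold \<gamma>_def index, simp add: divide_simps)
  have integrand: "z * ((a + 2 * b) / 4 - (b + (a + 2 * b) / 2) * (x * (1 - x))) * (z * (x * (1 - x))^2) ^ n
      = z ^ Suc n * ((a + 2 * b) / 4 * (x ^ (2 * n) * (1 - x) ^ (2 * n))
          - (b + (a + 2 * b) / 2) * (x ^ (2 * n + 1) * (1 - x) ^ (2 * n + 1)))" for x :: real
  proof -
    have powers: "(z * (x * (1 - x))^2) ^ n = z ^ n * x ^ (2 * n) * (1 - x) ^ (2 * n)"
      by (simp only: power_mult_distrib power_mult)
    show ?thesis
      unfolding powers by (simp add: field_simps)
  qed
  have total: "z ^ Suc n * ((a + 2 * b) / 4 * (2 * (4 * real n + 3) * \<gamma>)
          - (b + (a + 2 * b) / 2) * ((2 * real n + 1) * \<gamma>))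
      = (a * real (Suc n) + b) * z ^ Suc n /
          (real (Suc n) * (2 * real (Suc n) - 1) * real (4 * Suc n choose (2 * Suc n)))"
  proof -
    have "fact (4 * n + 3) / (fact (2 * n) * fact (2 * n + 1)) = 1 / \<gamma>"
      by (simp add: \<gamma>_def)
    then show ?thesis
      unfolding choose_4k_2k_factorial by (simp add: field_simps)
  qed
  show ?thesis
    unfolding integrand total[symmetric] by (intro has_integral_mult_right has_integral_diff beta1 beta2)
qed

lemma x_one_minus_x_squared_le:
  fixes x :: real
  assumes "0 \<le> x" "x \<le> 1"
  shows "x * (1 - x)^2 \<le> 4/27"
proof -
  have "4/27 - x * (1 - x)^2 = (1 - 3 * x)^2 * (4 - 3 * x) / 27"
    by (simp add: power2_eq_square algebra_simps)
  moreover have "(1 - 3 * x)^2 * (4 - 3 * x) \<ge> 0"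
    using assms by simp
  ultimately show ?thesis
    by linarith
qed

lemma x_one_minus_x_le:
  fixes x :: real
  shows "x * (1 - x) \<le> 1/4"
proof -
  have "1/4 - x * (1 - x) = (x - 1/2)^2"
    by (simp add: power2_eq_square algebra_simps)
  then show ?thesis
    by (metis diff_ge_0_iff_ge zero_le_power2)
qed

lemma sums_choose_3k_family:
  fixes a b z I :: real and p q :: "real \<Rightarrow> real"
  assumes z: "\<bar>z\<bar> < 27/4"
    and reduction: "\<And>x. 2/3 * z * ((a + 2 * b) * x - b * (1 - x)) * q x = p x * (1 - z * x * (1 - x)^2)"
    and q: "\<And>x. x \<in> {0..1} \<Longrightarrow> q x \<noteq> 0"
    and integral: "((\<lambda>x. p x / q x) has_integral I) {0..1}"
  shows "(\<lambda>n. let k = Suc n in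
      (a * real k + b) * z ^ k / (real k * (2 * real k - 1) * real (3 * k choose k))) sums I"
proof -
  have bound: "\<bar>z * x * (1 - x)^2\<bar> \<le> 4 * \<bar>z\<bar> / 27" if "x \<in> {0..1}" for x
  proof -
    have bounds: "0 \<le> x * (1 - x)^2" "x * (1 - x)^2 \<le> 4/27"
      using that x_one_minus_x_squared_le[of x] by auto
    have "\<bar>z * x * (1 - x)^2\<bar> = \<bar>z\<bar> * (x * (1 - x)^2)"
      using bounds(1) by (metis abs_mult abs_of_nonneg mult.assoc)
    also have "\<dots> \<le> \<bar>z\<bar> * (4/27)"
      using bounds(2) by (intro mult_left_mono) auto
    finally show ?thesis
      by simp
  qed
  have reduced: "p x / q x = 2/3 * z * ((a + 2 * b) * x - b * (1 - x)) / (1 - z * x * (1 - x)^2)"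
    if "x \<in> {0..1}" for x
  proof -
    have "1 - z * x * (1 - x)^2 \<noteq> 0"
      using bound[OF that] z by (auto dest: abs_le_D1)
    then show ?thesis
      using q[OF that] reduction[of x] by (simp add: frac_eq_eq)
  qed
  have "((\<lambda>x. 2/3 * z * ((a + 2 * b) * x - b * (1 - x)) / (1 - z * x * (1 - x)^2)) has_integral I) {0..1}"
    by (rule has_integral_eq[OF reduced integral])
  then show ?thesis
    unfolding Let_def
    by (intro sums_integral_geometric[OF _ _ _ bound _ _ has_integral_choose_3k_term])
       (use z in \<open>simp_all add: continuous_intros\<close>)
qed

lemma sums_choose_4k_family:
  fixes a b z I :: real and p q :: "real \<Rightarrow> real"
  assumes z: "\<bar>z\<bar> < 16"
    and reduction: "\<And>x. z * ((a + 2 * b) / 4 - (b + (a + 2 * b) / 2) * (x * (1 - x))) * q x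
      = p x * (1 - z * (x * (1 - x))^2)"
    and q: "\<And>x. x \<in> {0..1} \<Longrightarrow> q x \<noteq> 0"
    and integral: "((\<lambda>x. p x / q x) has_integral I) {0..1}"
  shows "(\<lambda>n. let k = Suc n in
      (a * real k + b) * z ^ k / (real k * (2 * real k - 1) * real (4 * k choose (2 * k)))) sums I"
proof -
  have bound: "\<bar>z * (x * (1 - x))^2\<bar> \<le> \<bar>z\<bar> / 16" if "x \<in> {0..1}" for x
  proof -
    have "\<bar>z * (x * (1 - x))^2\<bar> = \<bar>z\<bar> * (x * (1 - x))^2"
      by (simp add: abs_mult)
    also have "\<dots> \<le> \<bar>z\<bar> * (1/4)^2"
      using that x_one_minus_x_le[of x] by (intro mult_left_mono power_mono) auto
    finally show ?thesis
      by (simp add: power2_eq_square)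
  qed
  have reduced: "p x / q x
      = z * ((a + 2 * b) / 4 - (b + (a + 2 * b) / 2) * (x * (1 - x))) / (1 - z * (x * (1 - x))^2)"
    if "x \<in> {0..1}" for x
  proof -
    have "1 - z * (x * (1 - x))^2 \<noteq> 0"
      using bound[OF that] z by (auto dest: abs_le_D1)
    then show ?thesis
      using q[OF that] reduction[of x] by (simp add: frac_eq_eq)
  qed
  have "((\<lambda>x. z * ((a + 2 * b) / 4 - (b + (a + 2 * b) / 2) * (x * (1 - x)))
      / (1 - z * (x * (1 - x))^2)) has_integral I) {0..1}"
    by (rule has_integral_eq[OF reduced integral])
  then show ?thesis
    unfolding Let_def
    by (intro sums_integral_geometric[OF _ _ _ bound _ _ has_integral_choose_4k_term])
       (use z in \<open>simp_all add: continuous_intros\<close>)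
qed

lemma arctan_sqrt_3: "arctan (sqrt 3) = pi / 3"
  using arctan_tan[of "pi / 3"] tan_60 by simp

lemma arctan_inverse_sqrt_3: "arctan (1 / sqrt 3) = pi / 6"
  using arctan_tan[of "pi / 6"] tan_30 by simp

lemma has_integral_inverse_shifted_square:
  fixes a b s t :: real
  assumes "a > 0" "s \<le> t"
  shows "((\<lambda>x. 1 / ((x - b)^2 + a^2)) has_integral (arctan ((t - b) / a) - arctan ((s - b) / a)) / a) {s..t}"
proof (rule has_integral_antiderivative[where F = "\<lambda>x. arctan ((x - b) / a) / a"])
  fix x :: real
  define P where "P = (x - b)^2 + a^2"
  have "P > 0"
    unfolding P_def using assms by (simp add: add_nonneg_pos)
  moreover have "1 + ((x - b) / a)^2 = P / a^2"
    unfolding P_def using assms by (simp add: field_simps power2_eq_square)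
  moreover have "((\<lambda>x. arctan ((x - b) / a) / a) has_real_derivative
      inverse (1 + ((x - b) / a)^2) * (1 / a) / a) (at x)"
    using assms by (auto intro!: derivative_eq_intros)
  ultimately show "((\<lambda>x. arctan ((x - b) / a) / a) has_real_derivative 1 / ((x - b)^2 + a^2)) (at x)"
    using assms unfolding P_def[symmetric] by (simp add: field_simps power2_eq_square)
qed (use assms in \<open>simp_all add: diff_divide_distrib\<close>)

lemma sums_choose_3k_half:
  "(\<lambda>n. let k = Suc n in (5 * real k - 2) /
      (real k * (2 * real k - 1) * 2 ^ k * real (3 * k choose k))) sums (pi / 6)"
proof -
  have q_pos: "0 < 3 * (1 + x^2)" for x :: real
    by (simp add: add_pos_nonneg)
  have "((\<lambda>x. 2/3 * (1 / ((x - 0)^2 + 1^2))) has_integral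
      2/3 * ((arctan ((1 - 0) / 1) - arctan ((0 - 0) / 1)) / 1)) {0..1}"
    by (intro has_integral_mult_right has_integral_inverse_shifted_square) simp_all
  then have integral: "((\<lambda>x::real. 2 / (3 * (1 + x^2))) has_integral pi / 6) {0..1}"
    by (simp add: add.commute)
  have "(\<lambda>n. let k = Suc n in (5 * real k + -2) * (1/2) ^ k /
      (real k * (2 * real k - 1) * real (3 * k choose k))) sums (pi / 6)"
    by (rule sums_choose_3k_family[OF _ _ q_pos[THEN less_imp_neq, THEN not_sym] integral])
       (simp_all add: field_simps power2_eq_square)
  then show ?thesis
    by (simp add: Let_def power_one_over field_simps)
qed

lemma sums_choose_3k_eight_thirds:
  "(\<lambda>n. let k = Suc n in ((7 * real k - 3) * 8 ^ k) /
      (real k * (2 * real k - 1) * 3 ^ k * real (3 * k choose k))) sums (8 * sqrt 3 / 9 * pi)"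
proof -
  have quadratic: "(x - 1/4)^2 + (sqrt 3 / 4)^2 = (4 * x^2 - 2 * x + 1) / 4" for x :: real
    by (simp add: power_divide power2_eq_square field_simps)
  have q_pos: "0 < 3 * (4 * x^2 - 2 * x + 1)" for x :: real
  proof -
    have "0 < (x - 1/4)^2 + (sqrt 3 / 4)^2"
      by (intro add_nonneg_pos) auto
    then show ?thesis
      unfolding quadratic by simp
  qed
  have "((\<lambda>x. 4/3 * (1 / ((x - 1/4)^2 + (sqrt 3 / 4)^2))) has_integral
      4/3 * ((arctan ((1 - 1/4) / (sqrt 3 / 4)) - arctan ((0 - 1/4) / (sqrt 3 / 4))) / (sqrt 3 / 4))) {0..1}"
    by (intro has_integral_mult_right has_integral_inverse_shifted_square) simp_all
  also have "(1 - 1/4) / (sqrt 3 / 4) = sqrt 3"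
    by (simp add: field_simps real_div_sqrt)
  also have "(0 - 1/4) / (sqrt 3 / 4) = - (1 / sqrt 3)"
    by simp
  also have "4/3 * ((arctan (sqrt 3) - arctan (- (1 / sqrt 3))) / (sqrt 3 / 4)) = 8 * sqrt 3 / 9 * pi"
    by (simp add: arctan_minus arctan_sqrt_3 arctan_inverse_sqrt_3 field_simps)
  also have "(\<lambda>x::real. 4/3 * (1 / ((x - 1/4)^2 + (sqrt 3 / 4)^2)))
      = (\<lambda>x. 16 / (3 * (4 * x^2 - 2 * x + 1)))"
    unfolding quadratic by simp
  finally have integral:
    "((\<lambda>x::real. 16 / (3 * (4 * x^2 - 2 * x + 1))) has_integral 8 * sqrt 3 / 9 * pi) {0..1}" .
  have "(\<lambda>n. let k = Suc n in (7 * real k + -3) * (8/3) ^ k /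
      (real k * (2 * real k - 1) * real (3 * k choose k))) sums (8 * sqrt 3 / 9 * pi)"
    by (rule sums_choose_3k_family[OF _ _ q_pos[THEN less_imp_neq, THEN not_sym] integral])
       (simp_all add: field_simps power2_eq_square)
  then show ?thesis
    by (simp add: Let_def power_divide field_simps)
qed

lemma sums_choose_3k_minus_quarter:
  "(\<lambda>n. let k = Suc n in (28 * real k - 11) /
      (real k * (2 * real k - 1) * (-4) ^ k * real (3 * k choose k))) sums (- 2 * ln 2)"
proof -
  have quadratic_pos: "0 < x^2 - 3 * x + 4" for x :: real
  proof -
    have "x^2 - 3 * x + 4 = 7/4 + (x - 3/2)^2"
      by (simp add: power2_eq_square field_simps)
    then show ?thesis
      by (simp add: add_pos_nonneg)
  qed
  have q_pos: "0 < 3 * (1 + x) * (x^2 - 3 * x + 4)" if "x \<in> {0..1}" for x :: real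
    using that quadratic_pos[of x] by simp
  have integral:
    "((\<lambda>x::real. 2 * (5 * x - 11) / (3 * (1 + x) * (x^2 - 3 * x + 4))) has_integral - 2 * ln 2) {0..1}"
  proof (rule has_integral_antiderivative[where F = "\<lambda>x. - 2/3 * (2 * ln (1 + x) - ln (x^2 - 3 * x + 4))"])
    fix x :: real
    assume "x \<in> {0..1}"
    then show "((\<lambda>x. - 2/3 * (2 * ln (1 + x) - ln (x^2 - 3 * x + 4))) has_real_derivative
        2 * (5 * x - 11) / (3 * (1 + x) * (x^2 - 3 * x + 4))) (at x)"
      using quadratic_pos[of x] by (auto intro!: derivative_eq_intros simp: divide_simps)
        (simp_all add: algebra_simps power2_eq_square)
  next
    show "- 2/3 * (2 * ln (1 + 1) - ln (1^2 - 3 * 1 + 4)) - - 2/3 * (2 * ln (1 + 0) - ln (0^2 - 3 * 0 + 4))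
        = - 2 * ln (2::real)"
      using ln_realpow[of 2 2] by simp
  qed simp
  have "(\<lambda>n. let k = Suc n in (28 * real k + -11) * (-1/4) ^ k /
      (real k * (2 * real k - 1) * real (3 * k choose k))) sums (- 2 * ln 2)"
    by (rule sums_choose_3k_family[OF _ _ q_pos[THEN less_imp_neq, THEN not_sym] integral])
       (simp_all add: field_simps power2_eq_square)
  moreover have "(- (1/4) :: real) ^ k = 1 / (-4) ^ k" for k
    by (induct k) simp_all
  ultimately show ?thesis
    by (simp add: Let_def field_simps)
qed

lemma sums_choose_4k_minus_third:
  "(\<lambda>n. let k = Suc n in (7 * real k - 2) /
      (real k * (2 * real k - 1) * (-3) ^ k * real (4 * k choose (2 * k)))) sums (- ln 3 / 4)"
proof -
  have factors_pos: "0 < x^2 + x + 1" "0 < x^2 - 3 * x + 3" if "x \<in> {0..1}" for x :: real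
  proof -
    show "0 < x^2 + x + 1"
      using that by (intro add_nonneg_pos add_nonneg_nonneg) auto
    have "x^2 - 3 * x + 3 = (x - 3/2)^2 + 3/4"
      by (simp add: power2_eq_square field_simps)
    then show "0 < x^2 - 3 * x + 3"
      by (metis add_nonneg_pos zero_le_power2 zero_less_divide_iff zero_less_numeral)
  qed
  have q_pos: "0 < 4 * (x^2 + x + 1) * (x^2 - 3 * x + 3)" if "x \<in> {0..1}" for x :: real
    using factors_pos[OF that] by simp
  have integral: "((\<lambda>x::real. - (3 + 2 * x * (1 - x)) / (4 * (x^2 + x + 1) * (x^2 - 3 * x + 3)))
      has_integral - ln 3 / 4) {0..1}"
  proof (rule has_integral_antiderivative[where F = "\<lambda>x. - 1/8 * (ln (x^2 + x + 1) - ln (x^2 - 3 * x + 3))"])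
    fix x :: real
    assume "x \<in> {0..1}"
    then show "((\<lambda>x. - 1/8 * (ln (x^2 + x + 1) - ln (x^2 - 3 * x + 3))) has_real_derivative
        - (3 + 2 * x * (1 - x)) / (4 * (x^2 + x + 1) * (x^2 - 3 * x + 3))) (at x)"
      using factors_pos[of x] by (auto intro!: derivative_eq_intros simp: divide_simps)
        (simp_all add: algebra_simps power2_eq_square)
  qed simp_all
  have "(\<lambda>n. let k = Suc n in (7 * real k + -2) * (-1/3) ^ k /
      (real k * (2 * real k - 1) * real (4 * k choose (2 * k)))) sums (- ln 3 / 4)"
    by (rule sums_choose_4k_family[OF _ _ q_pos[THEN less_imp_neq, THEN not_sym] integral])
       (simp_all add: field_simps power2_eq_square)
  moreover have "(- (1/3) :: real) ^ k = 1 / (-3) ^ k" for k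
    by (induct k) simp_all
  ultimately show ?thesis
    by (simp add: Let_def field_simps)
qed

lemma sums_choose_4k_one:
  "(\<lambda>n. let k = Suc n in (10 * real k - 3) /
      (real k * (2 * real k - 1) * real (4 * k choose (2 * k)))) sums (2 * sqrt 3 / 9 * pi)"
proof -
  have quadratic: "(x - 1/2)^2 + (sqrt 3 / 2)^2 = x^2 - x + 1" for x :: real
    by (simp add: power_divide power2_eq_square field_simps)
  have q_pos: "0 < x^2 - x + 1" for x :: real
  proof -
    have "0 < (x - 1/2)^2 + (sqrt 3 / 2)^2"
      by (intro add_nonneg_pos) auto
    then show ?thesis
      unfolding quadratic .
  qed
  have "((\<lambda>x. 1 / ((x - 1/2)^2 + (sqrt 3 / 2)^2)) has_integral
      (arctan ((1 - 1/2) / (sqrt 3 / 2)) - arctan ((0 - 1/2) / (sqrt 3 / 2))) / (sqrt 3 / 2)) {0..1}"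
    by (intro has_integral_inverse_shifted_square) simp_all
  also have "(1 - 1/2) / (sqrt 3 / 2) = 1 / sqrt 3"
    by simp
  also have "(0 - 1/2) / (sqrt 3 / 2) = - (1 / sqrt 3)"
    by simp
  also have "(arctan (1 / sqrt 3) - arctan (- (1 / sqrt 3))) / (sqrt 3 / 2) = 2 * sqrt 3 / 9 * pi"
    by (simp add: arctan_minus arctan_inverse_sqrt_3 field_simps)
  also have "(\<lambda>x::real. 1 / ((x - 1/2)^2 + (sqrt 3 / 2)^2)) = (\<lambda>x. 1 / (x^2 - x + 1))"
    unfolding quadratic by simp
  finally have integral: "((\<lambda>x::real. 1 / (x^2 - x + 1)) has_integral 2 * sqrt 3 / 9 * pi) {0..1}" .
  have "(\<lambda>n. let k = Suc n in (10 * real k + -3) * 1 ^ k /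
      (real k * (2 * real k - 1) * real (4 * k choose (2 * k)))) sums (2 * sqrt 3 / 9 * pi)"
    by (rule sums_choose_4k_family[OF _ _ q_pos[THEN less_imp_neq, THEN not_sym] integral])
       (simp_all add: field_simps power2_eq_square)
  then show ?thesis
    by (simp add: Let_def)
qed

lemma sums_choose_4k_four_family:
  "(\<lambda>n. let k = Suc n in (3 * real k + -1) * 4 ^ k /
      (real k * (2 * real k - 1) * real (4 * k choose (2 * k)))) sums (pi / 2)"
proof -
  have quadratic: "(x - 1/2)^2 + (1/2)^2 = (2 * x^2 - 2 * x + 1) / 2" for x :: real
    by (simp add: power_divide power2_eq_square field_simps)
  have q_pos: "0 < 2 * x^2 - 2 * x + 1" for x :: real
  proof -
    have "0 < (x - 1/2)^2 + (1/2)^2"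
      by (intro add_nonneg_pos) auto
    then show ?thesis
      unfolding quadratic by simp
  qed
  have "((\<lambda>x. 1/2 * (1 / ((x - 1/2)^2 + (1/2)^2))) has_integral
      1/2 * ((arctan ((1 - 1/2) / (1/2)) - arctan ((0 - 1/2) / (1/2))) / (1/2))) {0..1}"
    by (intro has_integral_mult_right has_integral_inverse_shifted_square) simp_all
  also have "(\<lambda>x::real. 1/2 * (1 / ((x - 1/2)^2 + (1/2)^2))) = (\<lambda>x. 1 / (2 * x^2 - 2 * x + 1))"
    unfolding quadratic by simp
  finally have integral: "((\<lambda>x::real. 1 / (2 * x^2 - 2 * x + 1)) has_integral pi / 2) {0..1}"
    by (simp add: arctan_minus)
  show ?thesis
    by (rule sums_choose_4k_family[OF _ _ q_pos[THEN less_imp_neq, THEN not_sym] integral])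
       (simp_all add: field_simps power2_eq_square)
qed

lemma sums_choose_4k_four:
  "(\<lambda>n. let k = Suc n in ((3 * real k - 1) * 4 ^ k) /
      (real k * (2 * real k - 1) * real (4 * k choose (2 * k)))) sums (pi / 2)"
  using sums_choose_4k_four_family by (simp add: Let_def)

lemma sums_choose_4k_minus_two_family:
  "(\<lambda>n. let k = Suc n in (-3 * real k + 1/2) * (-2) ^ k /
      (real k * (2 * real k - 1) * real (4 * k choose (2 * k)))) sums (pi / 4)"
proof -
  have q_pos: "0 < 1 + 2 * (x * (1 - x))^2" for x :: real
    by (intro add_pos_nonneg) auto
  have integral: "((\<lambda>x::real. (1 - x * (1 - x)) / (1 + 2 * (x * (1 - x))^2)) has_integral pi / 4) {0..1}"
  proof (rule has_integral_antiderivative[where F = "\<lambda>x. 1/2 * arctan ((2 * x - 1) / (1 + 2 * x - 2 * x^2))"])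
    fix x :: real
    assume "x \<in> {0..1}"
    then have "x^2 \<le> x" "0 \<le> x"
      by (auto simp: power2_eq_square mult_left_le_one_le)
    then have "0 < 1 + 2 * x - 2 * x^2"
      by linarith
    define D where "D = 1 + 2 * x - 2 * x^2"
    define N where "N = 2 * x - 1"
    define E where "E = 1 + 2 * (x * (1 - x))^2"
    have "D \<noteq> 0" "E \<noteq> 0"
      using \<open>0 < 1 + 2 * x - 2 * x^2\<close> q_pos[of x] unfolding D_def E_def by auto
    have square: "1 + (N / D)^2 = 2 * E / D^2"
      using \<open>D \<noteq> 0\<close> unfolding N_def D_def E_def
      by (simp add: divide_simps) (simp add: algebra_simps power2_eq_square)
    have numerator: "2 * D - N * (2 - 2 * (2 * x)) = 4 * (1 - x * (1 - x))"
      unfolding N_def D_def by (simp add: algebra_simps power2_eq_square)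
    have "((\<lambda>x. 1/2 * arctan ((2 * x - 1) / (1 + 2 * x - 2 * x^2))) has_real_derivative
        1/2 * (inverse (1 + (N / D)^2) * ((2 * D - N * (2 - 2 * (2 * x))) / D^2))) (at x)"
      using \<open>0 < 1 + 2 * x - 2 * x^2\<close> unfolding N_def D_def
      by (auto intro!: derivative_eq_intros simp: power2_eq_square)
    also have "1/2 * (inverse (1 + (N / D)^2) * ((2 * D - N * (2 - 2 * (2 * x))) / D^2))
        = (1 - x * (1 - x)) / E"
      unfolding square numerator using \<open>D \<noteq> 0\<close> \<open>E \<noteq> 0\<close> by (simp add: field_simps power2_eq_square)
    finally show "((\<lambda>x. 1/2 * arctan ((2 * x - 1) / (1 + 2 * x - 2 * x^2))) has_real_derivative
        (1 - x * (1 - x)) / (1 + 2 * (x * (1 - x))^2)) (at x)"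
      unfolding E_def .
  qed (simp_all add: arctan_minus)
  show ?thesis
    by (rule sums_choose_4k_family[OF _ _ q_pos[THEN less_imp_neq, THEN not_sym] integral])
       (simp_all add: field_simps power2_eq_square)
qed

lemma sums_choose_4k_minus_two:
  "(\<lambda>n. let k = Suc n in ((6 * real k - 1) * (-2) ^ (k - 1)) /
      (real k * (2 * real k - 1) * real (4 * k choose (2 * k)))) sums (pi / 4)"
proof -
  have "(-3 * real (Suc n) + 1/2) * (-2) ^ Suc n = (6 * real (Suc n) - 1) * (-2 :: real) ^ (Suc n - 1)" for n
    by (simp add: algebra_simps)
  with sums_choose_4k_minus_two_family show ?thesis
    unfolding Let_def by (simp only:)
qed

lemma sums_choose_4k_quarter_family:
  "(\<lambda>n. let k = Suc n in (14 * real k + -3) * (1/4) ^ k /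
      (real k * (2 * real k - 1) * real (4 * k choose (2 * k)))) sums (2 / 3 * ln 2)"
proof -
  have factors_pos: "0 < 1 + x" "0 < 2 - x" if "x \<in> {0..1}" for x :: real
    using that by auto
  have q_pos: "0 < (1 + x) * (2 - x)" if "x \<in> {0..1}" for x :: real
    using factors_pos[OF that] by simp
  have integral: "((\<lambda>x::real. 1 / ((1 + x) * (2 - x))) has_integral 2 / 3 * ln 2) {0..1}"
  proof (rule has_integral_antiderivative[where F = "\<lambda>x. 1/3 * (ln (1 + x) - ln (2 - x))"])
    fix x :: real
    assume "x \<in> {0..1}"
    then show "((\<lambda>x. 1/3 * (ln (1 + x) - ln (2 - x))) has_real_derivative 1 / ((1 + x) * (2 - x))) (at x)"
      using factors_pos[of x] by (auto intro!: derivative_eq_intros simp: divide_simps)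
  qed simp_all
  show ?thesis
    by (rule sums_choose_4k_family[OF _ _ q_pos[THEN less_imp_neq, THEN not_sym] integral])
       (simp_all add: field_simps power2_eq_square)
qed

lemma sums_choose_4k_quarter:
  "(\<lambda>n. let k = Suc n in (14 * real k - 3) /
      (real k * (2 * real k - 1) * 4 ^ k * real (4 * k choose (2 * k)))) sums (2 / 3 * ln 2)"
  using sums_choose_4k_quarter_family by (simp add: Let_def power_one_over field_simps)

lemma central_binomial_Suc:
  "(real m + 1) * real (2 * Suc m choose Suc m) = 2 * (2 * real m + 1) * real (2 * m choose m)"
proof -
  have binomial_Suc: "real (2 * Suc m choose Suc m) = fact (2 * Suc m) / (fact (Suc m) * fact (Suc m))"
    by (subst binomial_fact) auto
  have binomial: "real (2 * m choose m) = fact (2 * m) / (fact m * fact m)"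
    by (subst binomial_fact) auto
  have index: "2 * Suc m = Suc (Suc (2 * m))"
    by simp
  show ?thesis
    unfolding binomial_Suc binomial unfolding index by (simp add: divide_simps) (simp add: algebra_simps)
qed

lemma choose_4k_2k_Suc:
  "(2 * real k + 1) * (real k + 1) * real (4 * Suc k choose (2 * Suc k))
     = 2 * (4 * real k + 1) * (4 * real k + 3) * real (4 * k choose (2 * k))"
proof -
  have e1: "2 * Suc (2 * k + 1) = 4 * Suc k" and e2: "Suc (2 * k + 1) = 2 * Suc k"
    and e3: "2 * (2 * k + 1) = 4 * k + 2" and e4: "2 * Suc (2 * k) = 4 * k + 2"
    and e5: "Suc (2 * k) = 2 * k + 1" and e6: "2 * (2 * k) = 4 * k"
    by simp_all
  have "(2 * real k + 2) * real (4 * Suc k choose (2 * Suc k))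
      = 2 * (4 * real k + 3) * real (4 * k + 2 choose (2 * k + 1))"
    using central_binomial_Suc[of "2 * k + 1", unfolded e1, unfolded e2, unfolded e3] by (simp add: algebra_simps)
  moreover have "(2 * real k + 1) * real (4 * k + 2 choose (2 * k + 1))
      = 2 * (4 * real k + 1) * real (4 * k choose (2 * k))"
    using central_binomial_Suc[of "2 * k", unfolded e4, unfolded e5, unfolded e6] by simp
  ultimately show ?thesis
    by algebra
qed

lemma tendsto_zero_over_choose_4n_2n:
  fixes f :: "nat \<Rightarrow> real"
  assumes "(\<lambda>n. \<bar>f n\<bar> * real n * (\<bar>z\<bar> / 16) ^ n) \<longlonglongrightarrow> 0"
  shows "(\<lambda>n. f n * z ^ n / real (4 * n choose (2 * n))) \<longlonglongrightarrow> 0"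
proof (rule Lim_null_comparison)
  have bound: "norm (f n * z ^ n / real (4 * n choose (2 * n))) \<le> 4 * (\<bar>f n\<bar> * real n * (\<bar>z\<bar> / 16) ^ n)"
    if "n > 0" for n
  proof -
    have lower: "16 ^ n / (4 * real n) \<le> real (4 * n choose (2 * n))"
      using central_binomial_lower_bound[of "2 * n"] that by (simp add: power_mult mult.assoc)
    have "norm (f n * z ^ n / real (4 * n choose (2 * n))) = \<bar>f n\<bar> * \<bar>z\<bar> ^ n / real (4 * n choose (2 * n))"
      by (simp add: abs_mult power_abs)
    also have "\<dots> \<le> \<bar>f n\<bar> * \<bar>z\<bar> ^ n / (16 ^ n / (4 * real n))"
      using lower that by (intro divide_left_mono) auto
    also have "\<dots> = 4 * (\<bar>f n\<bar> * real n * (\<bar>z\<bar> / 16) ^ n)"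
      using that by (simp add: power_divide field_simps)
    finally show ?thesis .
  qed
  show "\<forall>\<^sub>F n in sequentially. norm (f n * z ^ n / real (4 * n choose (2 * n)))
      \<le> 4 * (\<bar>f n\<bar> * real n * (\<bar>z\<bar> / 16) ^ n)"
    using eventually_gt_at_top[of "0::nat"] by (rule eventually_mono) (rule bound)
  show "(\<lambda>n. 4 * (\<bar>f n\<bar> * real n * (\<bar>z\<bar> / 16) ^ n)) \<longlonglongrightarrow> 0"
    using assms by (rule tendsto_mult_right_zero)
qed

lemma sums_telescoping:
  fixes s t G :: "nat \<Rightarrow> 'a::real_normed_field"
  assumes "s sums S"
    and "\<And>n. t n = c * s n + (G (Suc (Suc n)) - G (Suc n))"
    and "G \<longlonglongrightarrow> 0"
  shows "t sums (c * S - G 1)"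
proof -
  have "(\<lambda>n. G (Suc (Suc n)) - G (Suc n)) sums (0 - G 1)"
    using telescope_sums[OF LIMSEQ_Suc[OF assms(3)]] by simp
  then have "(\<lambda>n. c * s n + (G (Suc (Suc n)) - G (Suc n))) sums (c * S + (0 - G 1))"
    by (intro sums_add sums_mult assms(1))
  moreover have "t = (\<lambda>n. c * s n + (G (Suc (Suc n)) - G (Suc n)))"
    using assms(2) by (rule ext)
  ultimately show ?thesis
    by simp
qed

definition choose_4k_antidifference :: "(real \<Rightarrow> real) \<Rightarrow> real \<Rightarrow> nat \<Rightarrow> real" where
  "choose_4k_antidifference r z k = r (real k) / (real k * (2 * real k - 1)) * z ^ k / real (4 * k choose (2 * k))"

(* The certificate is the identity  term(k) - c * family_term(k) = G(k+1) - G(k)  cleared of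
   denominators, using C(4k+4, 2k+2) / C(4k, 2k) = 2 (4k+1) (4k+3) / ((2k+1) (k+1)). *)
lemma choose_4k_antidifference_step:
  fixes a b c z :: real and p r :: "real \<Rightarrow> real"
  assumes certificate: "\<And>K. K * (2 * K - 1) * (2 * (4 * K + 1) * (4 * K + 3)) * p K
      = 2 * (4 * K + 1) * (4 * K + 3) * (c * (a * K + b) - r K) + z * (K * (2 * K - 1)) * r (K + 1)"
    and "k \<ge> 1"
  shows "p (real k) * z ^ k / real (4 * k choose (2 * k))
    = c * ((a * real k + b) * z ^ k / (real k * (2 * real k - 1) * real (4 * k choose (2 * k))))
      + (choose_4k_antidifference r z (Suc k) - choose_4k_antidifference r z k)"
proof -
  define K where "K = real k"
  define B where "B = real (4 * k choose (2 * k))"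
  define B' where "B' = real (4 * Suc k choose (2 * Suc k))"
  define Z where "Z = z ^ k"
  define A where "A = K * (2 * K - 1)"
  define D where "D = 2 * (4 * K + 1) * (4 * K + 3)"
  define E where "E = (K + 1) * (2 * K + 1)"
  have "K \<ge> 1" "B > 0"
    unfolding K_def B_def using \<open>k \<ge> 1\<close> by auto
  then have "A > 0" "D > 0" "E > 0"
    unfolding A_def D_def E_def by auto
  have "E * B' = D * B"
    using choose_4k_2k_Suc[of k] unfolding K_def B_def B'_def D_def E_def by (simp only: ac_simps)
  then have next_binomial: "B' = D * B / E"
    using \<open>E > 0\<close> by (simp add: eq_divide_eq ac_simps)
  have "A * D * p K = D * (c * (a * K + b) - r K) + z * A * r (K + 1)"
    using certificate[of K] unfolding A_def D_def by (simp only: ac_simps)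
  then have pK: "p K = (D * (c * (a * K + b) - r K) + z * A * r (K + 1)) / (A * D)"
    using \<open>A > 0\<close> \<open>D > 0\<close> by (simp add: eq_divide_eq ac_simps)
  have shift: "real (Suc k) = K + 1" "z ^ Suc k = z * Z" "(K + 1) * (2 * (K + 1) - 1) = E"
    by (simp_all add: K_def Z_def E_def algebra_simps)
  \<comment> \<open>With the factors abbreviated, \<open>field_simps\<close> does not expand them and can use their positivity.\<close>
  show ?thesis
    unfolding choose_4k_antidifference_def shift K_def[symmetric] B_def[symmetric] B'_def[symmetric]
      Z_def[symmetric] A_def[symmetric] next_binomial pK
    using \<open>A > 0\<close> \<open>B > 0\<close> \<open>D > 0\<close> \<open>E > 0\<close> by (simp add: field_simps)
qed

lemma sums_choose_4k_telescoping:
  fixes a b c z S :: real and p r :: "real \<Rightarrow> real"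
  assumes family: "(\<lambda>n. let k = Suc n in
      (a * real k + b) * z ^ k / (real k * (2 * real k - 1) * real (4 * k choose (2 * k)))) sums S"
    and certificate: "\<And>K. K * (2 * K - 1) * (2 * (4 * K + 1) * (4 * K + 3)) * p K
      = 2 * (4 * K + 1) * (4 * K + 3) * (c * (a * K + b) - r K) + z * (K * (2 * K - 1)) * r (K + 1)"
    and r: "(\<lambda>n. \<bar>r (real n) / (real n * (2 * real n - 1))\<bar> * real n * (\<bar>z\<bar> / 16) ^ n) \<longlonglongrightarrow> 0"
  shows "(\<lambda>n. let k = Suc n in p (real k) * z ^ k / real (4 * k choose (2 * k))) sums (c * S - r 1 * z / 6)"
proof -
  have "(\<lambda>n. let k = Suc n in p (real k) * z ^ k / real (4 * k choose (2 * k)))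
      sums (c * S - choose_4k_antidifference r z 1)"
  proof (rule sums_telescoping[OF family])
    show "(let k = Suc n in p (real k) * z ^ k / real (4 * k choose (2 * k)))
        = c * (let k = Suc n in (a * real k + b) * z ^ k / (real k * (2 * real k - 1) * real (4 * k choose (2 * k))))
          + (choose_4k_antidifference r z (Suc (Suc n)) - choose_4k_antidifference r z (Suc n))" for n
      unfolding Let_def by (rule choose_4k_antidifference_step[OF certificate]) simp
    show "choose_4k_antidifference r z \<longlonglongrightarrow> 0"
      unfolding choose_4k_antidifference_def by (rule tendsto_zero_over_choose_4n_2n[OF r])
  qed
  moreover have "choose_4k_antidifference r z 1 = r 1 * z / 6"
    by (simp add: choose_4k_antidifference_def choose_two)
  ultimately show ?thesis
    by (simp only:)
qed

lemma sums_choose_4k_quadratic_four: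
  "(\<lambda>n. let k = Suc n in ((12 * real k ^ 2 + 1) * 4 ^ k) /
      real (4 * k choose (2 * k))) sums (11 / 2 * pi + 50 / 3)"
proof -
  define r where "r K = (4 * K - 3) * (4 * K - 1) * (- 11/3 - 8/3 * K - 2 * K^2)" for K :: real
  have "(\<lambda>n. let k = Suc n in (12 * real k ^ 2 + 1) * 4 ^ k / real (4 * k choose (2 * k)))
      sums (11 * (pi / 2) - r 1 * 4 / 6)"
  proof (rule sums_choose_4k_telescoping[OF sums_choose_4k_four_family,
        where p = "\<lambda>K. 12 * K^2 + 1" and r = r])
    show "K * (2 * K - 1) * (2 * (4 * K + 1) * (4 * K + 3)) * (12 * K^2 + 1)
        = 2 * (4 * K + 1) * (4 * K + 3) * (11 * (3 * K + -1) - r K) + 4 * (K * (2 * K - 1)) * r (K + 1)" for K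
      unfolding r_def by algebra
    show "(\<lambda>n. \<bar>r (real n) / (real n * (2 * real n - 1))\<bar> * real n * (\<bar>4\<bar> / 16) ^ n) \<longlonglongrightarrow> 0"
      unfolding r_def by real_asymp
  qed
  moreover have "r 1 = -25"
    by (simp add: r_def)
  ultimately show ?thesis
    by simp
qed

lemma sums_choose_4k_quadratic_minus_two:
  "(\<lambda>n. let k = Suc n in (real k * (126 * real k + 29) * (-2) ^ k) /
      real (4 * k choose (2 * k))) sums (- 2 * pi - 65 / 3)"
proof -
  define r where "r K = (4 * K - 3) * (4 * K - 1) * (- 4/3 - 19/3 * K - 14 * K^2)" for K :: real
  have "(\<lambda>n. let k = Suc n in real k * (126 * real k + 29) * (-2) ^ k / real (4 * k choose (2 * k)))
      sums (-8 * (pi / 4) - r 1 * -2 / 6)"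
  proof (rule sums_choose_4k_telescoping[OF sums_choose_4k_minus_two_family,
        where p = "\<lambda>K. K * (126 * K + 29)" and r = r])
    show "K * (2 * K - 1) * (2 * (4 * K + 1) * (4 * K + 3)) * (K * (126 * K + 29))
        = 2 * (4 * K + 1) * (4 * K + 3) * (-8 * (-3 * K + 1/2) - r K) + -2 * (K * (2 * K - 1)) * r (K + 1)" for K
      unfolding r_def by algebra
    show "(\<lambda>n. \<bar>r (real n) / (real n * (2 * real n - 1))\<bar> * real n * (\<bar>-2\<bar> / 16) ^ n) \<longlonglongrightarrow> 0"
      unfolding r_def by real_asymp
  qed
  moreover have "r 1 = -65"
    by (simp add: r_def)
  ultimately show ?thesis
    by simp
qed

lemma sums_choose_4k_quadratic_quarter:
  "(\<lambda>n. let k = Suc n in (real k * (70 * real k - 37)) /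
      (4 ^ k * real (4 * k choose (2 * k)))) sums (8 / 729 * (46 * ln 2 + 111))"
proof -
  define r where "r K = (4 * K - 3) * (4 * K - 1) * (- 184/243 - 8/81 * K - 80/9 * K^2)" for K :: real
  have "(\<lambda>n. let k = Suc n in real k * (70 * real k - 37) * (1/4) ^ k / real (4 * k choose (2 * k)))
      sums (184/243 * (2 / 3 * ln 2) - r 1 * (1/4) / 6)"
  proof (rule sums_choose_4k_telescoping[OF sums_choose_4k_quarter_family,
        where p = "\<lambda>K. K * (70 * K - 37)" and r = r])
    show "K * (2 * K - 1) * (2 * (4 * K + 1) * (4 * K + 3)) * (K * (70 * K - 37))
        = 2 * (4 * K + 1) * (4 * K + 3) * (184/243 * (14 * K + -3) - r K) + 1/4 * (K * (2 * K - 1)) * r (K + 1)" for K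
      unfolding r_def by algebra
    show "(\<lambda>n. \<bar>r (real n) / (real n * (2 * real n - 1))\<bar> * real n * (\<bar>1/4\<bar> / 16) ^ n) \<longlonglongrightarrow> 0"
      unfolding r_def by real_asymp
  qed
  moreover have "r 1 = -2368/81"
    by (simp add: r_def)
  ultimately show ?thesis
    by (simp add: Let_def power_one_over field_simps)
qed

theorem theorem1p4:
  shows "((\<lambda>n. let k = Suc n in (5 * real k - 2) /
            (real k * (2 * real k - 1) * 2 ^ k * real (3 * k choose k))) sums (pi / 6)) \<and>
     ((\<lambda>n. let k = Suc n in ((7 * real k - 3) * 8 ^ k) /
            (real k * (2 * real k - 1) * 3 ^ k * real (3 * k choose k))) sums (8 * sqrt 3 / 9 * pi)) \<and>
     ((\<lambda>n. let k = Suc n in (28 * real k - 11) /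
            (real k * (2 * real k - 1) * (-4) ^ k * real (3 * k choose k))) sums (- 2 * ln 2)) \<and>
     ((\<lambda>n. let k = Suc n in (7 * real k - 2) /
            (real k * (2 * real k - 1) * (-3) ^ k * real (4 * k choose (2 * k)))) sums (- ln 3 / 4)) \<and>
     ((\<lambda>n. let k = Suc n in (10 * real k - 3) /
            (real k * (2 * real k - 1) * real (4 * k choose (2 * k)))) sums (2 * sqrt 3 / 9 * pi)) \<and>
     ((\<lambda>n. let k = Suc n in ((3 * real k - 1) * 4 ^ k) /
            (real k * (2 * real k - 1) * real (4 * k choose (2 * k)))) sums (pi / 2)) \<and>
     ((\<lambda>n. let k = Suc n in ((6 * real k - 1) * (-2) ^ (k - 1)) /
            (real k * (2 * real k - 1) * real (4 * k choose (2 * k)))) sums (pi / 4)) \<and>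
     ((\<lambda>n. let k = Suc n in (14 * real k - 3) /
            (real k * (2 * real k - 1) * 4 ^ k * real (4 * k choose (2 * k)))) sums (2 / 3 * ln 2)) \<and>
     ((\<lambda>n. let k = Suc n in ((12 * real k ^ 2 + 1) * 4 ^ k) /
            real (4 * k choose (2 * k))) sums (11 / 2 * pi + 50 / 3)) \<and>
     ((\<lambda>n. let k = Suc n in (real k * (126 * real k + 29) * (-2) ^ k) /
            real (4 * k choose (2 * k))) sums (- 2 * pi - 65 / 3)) \<and>
     ((\<lambda>n. let k = Suc n in (real k * (70 * real k - 37)) /
            (4 ^ k * real (4 * k choose (2 * k)))) sums (8 / 729 * (46 * ln 2 + 111)))"
  by (intro conjI sums_choose_3k_half sums_choose_3k_eight_thirds sums_choose_3k_minus_quarter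
      sums_choose_4k_minus_third sums_choose_4k_one sums_choose_4k_four sums_choose_4k_minus_two
      sums_choose_4k_quarter sums_choose_4k_quadratic_four sums_choose_4k_quadratic_minus_two
      sums_choose_4k_quadratic_quarter)

end
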